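(* Let $K\subset\mathbb R^2$ be a compact connected set with $\mathcal H^1(K)<+\infty$. Assume that for some $x\in K$ and $r\in(0,\mathrm{diam}(K))$ we have $\beta_K(x,r)\leq1/2$. Then $$\mathcal H^1(K\cap B(x,r))\geq 2r-3r\beta_K(x,r).$$
   Context: $\beta_K(x,r)=\frac1r\inf_L\max\{\sup_{y\in K\cap\overline B(x,r)}\mathrm{dist}(y,L),\sup_{y\in L\cap\overline B(x,r)}\mathrm{dist}(y,K)\}$, the infimum being over lines $L$ passing through $x$. *)

theory Defs
  imports "HOL-Analysis.Analysis"
begin

definition hausdorff1_pre :: "real \<Rightarrow> 'a::metric_space set \<Rightarrow> ennreal" where
  "hausdorff1_pre \<delta> A =
     (INF C \<in> {C :: nat \<Rightarrow> 'a set. A \<subseteq> (\<Union>i. C i) \<and>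
                  (\<forall>i. bounded (C i) \<and> diameter (C i) \<le> \<delta>)}.
        (\<Sum>i. ennreal (diameter (C i))))"

text \<open>1-dimensional Hausdorff measure (normalised so that segments have their length).\<close>
definition hausdorff1 :: "'a::metric_space set \<Rightarrow> ennreal" where
  "hausdorff1 A = (SUP \<delta> \<in> {0<..}. hausdorff1_pre \<delta> A)"

definition lines_through :: "real^2 \<Rightarrow> (real^2) set set" where
  "lines_through x = {{x + t *\<^sub>R v | t. True} | v. v \<noteq> 0}"

definition beta :: "(real^2) set \<Rightarrow> real^2 \<Rightarrow> real \<Rightarrow> real" where
  "beta K x r = (1 / r) *
     (INF L \<in> lines_through x.
        max (SUP y \<in> K \<inter> cball x r. infdist y L)
            (SUP y \<in> L \<inter> cball x r. infdist y K))"

end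

theory Submission
  imports Defs
begin

(* Fix a line x + R v at Hausdorff-type distance d > r beta from K near x and project
   K \<inter> B(x,r) orthogonally onto it. The projection is 1-Lipschitz, so H^1 of K \<inter> B(x,r)
   bounds the Lebesgue measure of its shadow. On [-c,c], c = r - d/2, the shadow is d-dense;
   and since K is connected and comes close to both endpoints x \<plusminus> r v, a point of the shadow
   lying between two gaps pushes those gaps beyond \<plusminus>(r - d). So the gaps fit into sets of
   total length 2d, giving H^1 \<ge> 2c - 2d = 2r - 3d; then let d decrease to r beta. *)

lemma gaps_in_small_set:
  fixes E :: "real set" and a c d :: real
  assumes "0 \<in> E" and "0 \<le> a" and "c \<le> a + d"
    and dense: "\<And>u. \<bar>u\<bar> + d \<le> c \<Longrightarrow> \<exists>s\<in>E. \<bar>s - u\<bar> < d"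
    and gaps_outside: "\<And>t1 s t2. t1 < s \<Longrightarrow> s < t2 \<Longrightarrow> t1 \<in> {-c..c} - E \<Longrightarrow> t2 \<in> {-c..c} - E
                         \<Longrightarrow> s \<in> E \<Longrightarrow> t1 < -a \<and> a < t2"
  shows "\<exists>T \<in> sets lborel. emeasure lborel T \<le> ennreal (2 * d) \<and> {-c..c} \<subseteq> E \<union> T"
proof (cases "\<exists>m\<in>{-c..c} - E. \<bar>m\<bar> \<le> a")
  case False
  have "{-c..c} \<subseteq> E \<union> ({-c..-a} \<union> {a..c})"
  proof
    fix t assume "t \<in> {-c..c}"
    with False have "t \<in> E \<or> a < \<bar>t\<bar>" by force
    with \<open>t \<in> {-c..c}\<close> show "t \<in> E \<union> ({-c..-a} \<union> {a..c})" by (auto simp: abs_if split: if_splits)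
  qed
  moreover have "emeasure lborel ({-c..-a} \<union> {a..c}) \<le> ennreal (2 * d)"
  proof -
    have "emeasure lborel ({-c..-a} \<union> {a..c}) \<le> emeasure lborel {-c..-a} + emeasure lborel {a..c}"
      by (intro emeasure_subadditive) auto
    also have "\<dots> \<le> ennreal (2 * d)"
    proof (cases "a \<le> c")
      case True
      then have "emeasure lborel {-c..-a} + emeasure lborel {a..c} = ennreal (2 * (c - a))"
        by (simp flip: ennreal_plus)
      with \<open>c \<le> a + d\<close> show ?thesis by (simp add: ennreal_leI)
    qed simp
    finally show ?thesis .
  qed
  moreover have "{-c..-a} \<union> {a..c} \<in> sets lborel" by simp
  ultimately show ?thesis by blast
next
  case True
  txt \<open>A gap inside [-a,a] makes the set of gaps an interval, since a point of E between two
    gaps would push them beyond \<open>\<plusminus>a\<close> on both sides of \<open>0 \<in> E\<close>; density then bounds its length.\<close>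
  define M where "M = {-c..c} - E"
  obtain m where m: "m \<in> M" "\<bar>m\<bar> \<le> a" using True unfolding M_def by blast
  have M_interval: "s \<in> M" if "t1 \<in> M" "t2 \<in> M" "t1 \<le> s" "s \<le> t2" for t1 t2 s
  proof (rule ccontr)
    assume "s \<notin> M"
    with that have "t1 < s" "s < t2" "s \<in> E" unfolding M_def by (auto simp: order.order_iff_strict)
    with that gaps_outside[of t1 s t2] have t12: "t1 < -a" "a < t2" unfolding M_def by blast+
    have "m \<noteq> 0" using m \<open>0 \<in> E\<close> unfolding M_def by auto
    then consider "0 < m" | "m < 0" by linarith
    then show False
    proof cases
      case 1
      have "t1 < 0" using t12 \<open>0 \<le> a\<close> by linarith
      from gaps_outside[OF this 1] that(1) m(1) \<open>0 \<in> E\<close> have "a < m" unfolding M_def by blast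
      with m(2) show False by linarith
    next
      case 2
      have "0 < t2" using t12 \<open>0 \<le> a\<close> by linarith
      from gaps_outside[OF 2 this] that(2) m(1) \<open>0 \<in> E\<close> have "m < -a" unfolding M_def by blast
      with m(2) show False by linarith
    qed
  qed
  have "M \<noteq> {}" using m by auto
  have bdd: "bdd_above M" "bdd_below M"
    unfolding M_def by (auto intro!: bdd_aboveI[of _ c] bdd_belowI[of _ "-c"])
  have "Sup M - Inf M \<le> 2 * d"
  proof (rule ccontr)
    assume long: "\<not> Sup M - Inf M \<le> 2 * d"
    define u where "u = (Inf M + Sup M) / 2"
    have "-c \<le> Inf M" using \<open>M \<noteq> {}\<close> by (rule cInf_greatest) (simp add: M_def)
    moreover have "Sup M \<le> c" using \<open>M \<noteq> {}\<close> by (rule cSup_least) (simp add: M_def)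
    moreover have "2 * u = Inf M + Sup M" unfolding u_def by simp
    ultimately have "u + d \<le> c" "d - u \<le> c" using long by linarith+
    then have "\<bar>u\<bar> + d \<le> c" by (simp add: abs_if)
    then obtain s where s: "s \<in> E" "\<bar>s - u\<bar> < d" using dense by blast
    then have "s - u < d" "u - s < d" by (simp_all add: abs_less_iff)
    with long \<open>2 * u = Inf M + Sup M\<close> have "Inf M < s" "s < Sup M" by linarith+
    then obtain t1 t2 where "t1 \<in> M" "t1 < s" "t2 \<in> M" "s < t2"
      using cInf_lessD[OF \<open>M \<noteq> {}\<close>] less_cSupD[OF \<open>M \<noteq> {}\<close>] by blast
    then have "s \<in> M" using M_interval[of t1 t2 s] by simp
    with s show False unfolding M_def by auto
  qed
  then have "emeasure lborel {Inf M..Sup M} \<le> ennreal (2 * d)"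
    using cInf_le_cSup[OF \<open>M \<noteq> {}\<close> bdd] by (simp add: ennreal_leI)
  moreover have "{-c..c} \<subseteq> E \<union> {Inf M..Sup M}"
  proof
    fix t assume "t \<in> {-c..c}"
    then have "t \<in> E \<or> t \<in> M" unfolding M_def by blast
    then show "t \<in> E \<union> {Inf M..Sup M}" using cInf_lower[OF _ bdd(2)] cSup_upper[OF _ bdd(1)] by auto
  qed
  ultimately show ?thesis by (intro bexI[of _ "{Inf M..Sup M}"]) auto
qed

lemma lipschitz_image_subset_interval:
  fixes f :: "'a::metric_space \<Rightarrow> real"
  assumes lip: "\<And>y z. \<bar>f y - f z\<bar> \<le> dist y z" and "bounded C"
  shows "\<exists>lo hi. f ` C \<subseteq> {lo..hi} \<and> hi - lo \<le> diameter C"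
proof (cases "C = {}")
  case False
  have close: "f y \<le> f z + diameter C" if "y \<in> C" "z \<in> C" for y z
    using lip[of y z] diameter_bounded_bound[OF \<open>bounded C\<close> that] by linarith
  obtain z0 where "z0 \<in> C" using False by blast
  have "f ` C \<noteq> {}" using False by blast
  have bdd: "bdd_above (f ` C)" "bdd_below (f ` C)"
    using close \<open>z0 \<in> C\<close>
    by (force intro!: bdd_aboveI[of _ "f z0 + diameter C"] bdd_belowI[of _ "f z0 - diameter C"])+
  have "Sup (f ` C) \<le> Inf (f ` C) + diameter C"
  proof -
    have "Sup (f ` C) - diameter C \<le> Inf (f ` C)"
    proof (rule cInf_greatest[OF \<open>f ` C \<noteq> {}\<close>])
      fix w assume "w \<in> f ` C"
      then obtain z where "z \<in> C" "w = f z" by blast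
      moreover have "Sup (f ` C) \<le> f z + diameter C"
        using close \<open>z \<in> C\<close> \<open>f ` C \<noteq> {}\<close> by (intro cSup_least) auto
      ultimately show "Sup (f ` C) - diameter C \<le> w" by simp
    qed
    then show ?thesis by simp
  qed
  moreover have "f ` C \<subseteq> {Inf (f ` C)..Sup (f ` C)}"
    using cInf_lower[OF _ bdd(2)] cSup_upper[OF _ bdd(1)] by auto
  ultimately show ?thesis by (intro exI[of _ "Inf (f ` C)"] exI[of _ "Sup (f ` C)"]) simp
qed (auto intro!: exI[of _ 0])

lemma hausdorff1_pre_le_hausdorff1: "hausdorff1_pre \<delta> S \<le> hausdorff1 S" if "0 < \<delta>"
  unfolding hausdorff1_def using that by (intro SUP_upper) auto

lemma covered_interval_le_hausdorff1:
  fixes f :: "'a::metric_space \<Rightarrow> real"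
  assumes lip: "\<And>y z. \<bar>f y - f z\<bar> \<le> dist y z"
    and cover: "{a..b} \<subseteq> f ` S \<union> T" and "T \<in> sets lborel"
    and "emeasure lborel T \<le> ennreal l" and "0 \<le> l"
  shows "ennreal (b - a - l) \<le> hausdorff1 S"
proof -
  have "ennreal (b - a - l) \<le> (\<Sum>i. ennreal (diameter (C i)))"
    if C: "S \<subseteq> (\<Union>i. C i)" "\<And>i. bounded (C i)" for C :: "nat \<Rightarrow> 'a set"
  proof -
    obtain lo hi where lohi: "\<And>i. f ` C i \<subseteq> {lo i..hi i}" "\<And>i. hi i - lo i \<le> diameter (C i)"
      using lipschitz_image_subset_interval[OF lip C(2)] by metis
    have "f ` S \<subseteq> f ` (\<Union>i. C i)"
      using C(1) by (rule image_mono)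
    also have "\<dots> \<subseteq> (\<Union>i. {lo i..hi i})"
      using lohi(1) by (auto simp: image_UN)
    finally have "{a..b} \<subseteq> (\<Union>i. {lo i..hi i}) \<union> T"
      using cover by (meson Un_mono order_refl order_trans)
    then have "emeasure lborel {a..b} \<le> emeasure lborel ((\<Union>i. {lo i..hi i}) \<union> T)"
      using \<open>T \<in> sets lborel\<close> by (intro emeasure_mono) auto
    then have "ennreal (b - a) \<le> emeasure lborel ((\<Union>i. {lo i..hi i}) \<union> T)"
      by (simp add: emeasure_lborel_Icc_eq ennreal_neg split: if_splits)
    also have "\<dots> \<le> emeasure lborel (\<Union>i. {lo i..hi i}) + emeasure lborel T"
      using \<open>T \<in> sets lborel\<close> by (intro emeasure_subadditive) auto
    also have "\<dots> \<le> (\<Sum>i. emeasure lborel {lo i..hi i}) + ennreal l"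
      using assms(4) by (intro add_mono emeasure_subadditive_countably) auto
    also have "(\<Sum>i. emeasure lborel {lo i..hi i}) \<le> (\<Sum>i. ennreal (diameter (C i)))"
      using lohi(2) by (intro suminf_le) (auto simp: emeasure_lborel_Icc_eq intro: ennreal_leI)
    finally have "ennreal (b - a) \<le> ennreal l + (\<Sum>i. ennreal (diameter (C i)))"
      by (simp add: add_right_mono add.commute)
    then show ?thesis
      using \<open>0 \<le> l\<close> by (simp add: ennreal_minus_le_iff flip: ennreal_minus)
  qed
  then have "ennreal (b - a - l) \<le> hausdorff1_pre 1 S"
    unfolding hausdorff1_pre_def by (auto intro!: INF_greatest)
  also have "\<dots> \<le> hausdorff1 S" by (rule hausdorff1_pre_le_hausdorff1) simp
  finally show ?thesis .
qed

lemma norm_diff_scaleR_unit_squared: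
  fixes w v :: "'a::real_inner"
  assumes "norm v = 1"
  shows "(norm (w - t *\<^sub>R v))\<^sup>2 = (norm (w - (w \<bullet> v) *\<^sub>R v))\<^sup>2 + (w \<bullet> v - t)\<^sup>2"
proof -
  have "v \<bullet> v = 1" using assms by (simp add: norm_eq_1)
  then show ?thesis
    unfolding power2_norm_eq_inner
    by (simp add: inner_diff_left inner_diff_right inner_commute algebra_simps power2_eq_square)
qed

lemma infdist_line_unit:
  fixes x v y :: "'a::real_inner"
  assumes "norm v = 1"
  shows "infdist y (range (\<lambda>t. x + t *\<^sub>R v)) = norm ((y - x) - ((y - x) \<bullet> v) *\<^sub>R v)"
proof (rule antisym)
  have "dist y (x + ((y - x) \<bullet> v) *\<^sub>R v) = norm ((y - x) - ((y - x) \<bullet> v) *\<^sub>R v)"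
    by (simp add: dist_norm algebra_simps)
  then show "infdist y (range (\<lambda>t. x + t *\<^sub>R v)) \<le> norm ((y - x) - ((y - x) \<bullet> v) *\<^sub>R v)"
    by (metis infdist_le rangeI)
next
  have "norm ((y - x) - ((y - x) \<bullet> v) *\<^sub>R v) \<le> dist y (x + t *\<^sub>R v)" for t
  proof (rule power2_le_imp_le)
    show "(norm ((y - x) - ((y - x) \<bullet> v) *\<^sub>R v))\<^sup>2 \<le> (dist y (x + t *\<^sub>R v))\<^sup>2"
      using norm_diff_scaleR_unit_squared[OF assms, of "y - x" t] by (simp add: dist_norm algebra_simps)
  qed simp
  then show "norm ((y - x) - ((y - x) \<bullet> v) *\<^sub>R v) \<le> infdist y (range (\<lambda>t. x + t *\<^sub>R v))"
    by (subst infdist_notempty) (auto intro!: cINF_greatest)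
qed

locale approximating_line =
  fixes K :: "'a::real_inner set" and x v :: 'a and r d :: real
  assumes K_connected: "connected K" and x_in_K: "x \<in> K" and r_pos: "0 < r"
    and unit: "norm v = 1"
    and K_near_line: "\<And>y. y \<in> K \<Longrightarrow> dist x y \<le> r \<Longrightarrow> norm ((y - x) - ((y - x) \<bullet> v) *\<^sub>R v) < d"
    and line_near_K: "\<And>u. \<bar>u\<bar> \<le> r \<Longrightarrow> \<exists>k\<in>K. dist k (x + u *\<^sub>R v) < d"
begin

definition coord :: "'a \<Rightarrow> real" where
  "coord y = (y - x) \<bullet> v"

abbreviation shadow :: "real set" where
  "shadow \<equiv> coord ` (K \<inter> ball x r)"

lemma d_pos: "0 < d"
  using K_near_line[OF x_in_K] r_pos by simp

lemma coord_lipschitz: "\<bar>coord y - coord z\<bar> \<le> dist y z"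
proof -
  have "coord y - coord z = (y - z) \<bullet> v" unfolding coord_def by (simp add: inner_diff_left)
  then show ?thesis using Cauchy_Schwarz_ineq2[of "y - z" v] unit by (simp add: dist_norm)
qed

lemma coord_near: "\<bar>coord k - u\<bar> \<le> dist k (x + u *\<^sub>R v)"
proof -
  have "v \<bullet> v = 1" using unit by (simp add: norm_eq_1)
  then have "coord k - u = (k - (x + u *\<^sub>R v)) \<bullet> v"
    unfolding coord_def by (simp add: inner_diff_left inner_add_left)
  then show ?thesis using Cauchy_Schwarz_ineq2[of "k - (x + u *\<^sub>R v)" v] unit by (simp add: dist_norm)
qed

lemma zero_in_shadow: "0 \<in> shadow"
  using x_in_K r_pos by (auto simp: coord_def intro!: image_eqI[of _ _ x])

lemma shadow_dense:
  assumes "\<bar>u\<bar> + d \<le> r"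
  shows "\<exists>s\<in>shadow. \<bar>s - u\<bar> < d"
proof -
  obtain k where k: "k \<in> K" "dist k (x + u *\<^sub>R v) < d"
    using line_near_K[of u] assms d_pos by auto
  have "dist x k \<le> dist k (x + u *\<^sub>R v) + norm (u *\<^sub>R v)"
    using dist_triangle[of k x "x + u *\<^sub>R v"] by (simp add: dist_commute dist_norm)
  with k assms unit have "k \<in> K \<inter> ball x r" by simp
  moreover have "\<bar>coord k - u\<bar> < d" using coord_near[of k u] k by linarith
  ultimately show ?thesis by blast
qed

lemma coord_on_sphere:
  assumes "y \<in> K" "dist x y = r" "c\<^sup>2 + d\<^sup>2 \<le> r\<^sup>2"
  shows "c < \<bar>coord y\<bar>"
proof -
  have "norm ((y - x) - ((y - x) \<bullet> v) *\<^sub>R v) < d" using K_near_line assms by simp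
  then have "(norm ((y - x) - ((y - x) \<bullet> v) *\<^sub>R v))\<^sup>2 < d\<^sup>2" by (simp add: power_strict_mono)
  moreover have "r\<^sup>2 = (norm ((y - x) - ((y - x) \<bullet> v) *\<^sub>R v))\<^sup>2 + (coord y)\<^sup>2"
    using norm_diff_scaleR_unit_squared[OF unit, of "y - x" 0] assms(2)
    by (simp add: coord_def dist_norm norm_minus_commute)
  ultimately have "c\<^sup>2 < (coord y)\<^sup>2" using assms(3) by linarith
  then show ?thesis by (metis abs_ge_self order.strict_trans1 power2_less_imp_less abs_ge_zero power2_abs)
qed

lemma K_in_slab:
  assumes sphere: "c\<^sup>2 + d\<^sup>2 \<le> r\<^sup>2" and "\<bar>t1\<bar> \<le> c" "\<bar>t2\<bar> \<le> c" "t1 \<notin> shadow" "t2 \<notin> shadow"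
    and "s \<in> shadow" "t1 < s" "s < t2"
  shows "K \<subseteq> {y. dist x y < r \<and> t1 < coord y \<and> coord y < t2}"
proof -
  txt \<open>The open slab is also relatively closed in K: points of K on the sphere project outside
    [-c,c], and the levels t1, t2 are not attained inside the ball.\<close>
  define A where "A = K \<inter> {y. dist x y < r \<and> t1 < coord y \<and> coord y < t2}"
  have "A = K \<inter> {y. dist x y \<le> r \<and> t1 \<le> coord y \<and> coord y \<le> t2}"
  proof (intro equalityI subsetI)
    fix y assume y: "y \<in> K \<inter> {y. dist x y \<le> r \<and> t1 \<le> coord y \<and> coord y \<le> t2}"
    with assms(2,3) have "\<bar>coord y\<bar> \<le> c" by auto
    with y coord_on_sphere[OF _ _ sphere] have "dist x y < r" by force
    with y have "coord y \<in> shadow" by auto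
    with y \<open>dist x y < r\<close> assms(4,5) show "y \<in> A" unfolding A_def by force
  qed (auto simp: A_def)
  then have "closedin (top_of_set K) A"
    unfolding coord_def by (auto intro!: closedin_closed_Int closed_Collect_conj closed_Collect_le continuous_intros)
  moreover have "openin (top_of_set K) A"
    unfolding A_def coord_def by (auto intro!: openin_open_Int open_Collect_conj open_Collect_less continuous_intros)
  moreover have "A \<noteq> {}"
    using assms(6-8) unfolding A_def by auto
  ultimately have "A = K"
    using K_connected by (auto simp: connected_clopen)
  then show ?thesis unfolding A_def by blast
qed

lemma shadow_gaps_outside:
  assumes "c\<^sup>2 + d\<^sup>2 \<le> r\<^sup>2" and "t1 < s" "s < t2" "t1 \<in> {-c..c} - shadow" "t2 \<in> {-c..c} - shadow"
    and "s \<in> shadow"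
  shows "t1 < -(r - d) \<and> r - d < t2"
proof -
  have slab: "K \<subseteq> {y. dist x y < r \<and> t1 < coord y \<and> coord y < t2}"
    using assms by (intro K_in_slab) auto
  obtain k1 where "k1 \<in> K" "dist k1 (x + r *\<^sub>R v) < d"
    using line_near_K[of r] r_pos by auto
  with coord_near[of k1 r] slab have "r - d < t2" by force
  obtain k2 where "k2 \<in> K" "dist k2 (x + (-r) *\<^sub>R v) < d"
    using line_near_K[of "-r"] r_pos by auto
  with coord_near[of k2 "-r"] slab have "t1 < -(r - d)" by force
  with \<open>r - d < t2\<close> show ?thesis by blast
qed

lemma hausdorff1_ball_ge:
  assumes "5 * d \<le> 4 * r"
  shows "ennreal (2 * r - 3 * d) \<le> hausdorff1 (K \<inter> ball x r)"
proof -
  define c where "c = r - d / 2"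
  have "r\<^sup>2 - c\<^sup>2 - d\<^sup>2 = d * (r - 5 * d / 4)"
    unfolding c_def by (simp add: power2_eq_square algebra_simps)
  also have "\<dots> \<ge> 0" using d_pos assms by simp
  finally have sphere: "c\<^sup>2 + d\<^sup>2 \<le> r\<^sup>2" by simp
  obtain T where T: "T \<in> sets lborel" "emeasure lborel T \<le> ennreal (2 * d)" "{-c..c} \<subseteq> shadow \<union> T"
    using gaps_in_small_set[OF zero_in_shadow, of "r - d" c d] shadow_dense shadow_gaps_outside[OF sphere]
      d_pos assms unfolding c_def by force
  have "ennreal (c - -c - 2 * d) \<le> hausdorff1 (K \<inter> ball x r)"
    using covered_interval_le_hausdorff1[OF coord_lipschitz T(3,1,2)] d_pos by simp
  then show ?thesis unfolding c_def by (simp add: algebra_simps)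
qed

end

lemma lines_through_unit:
  assumes "L \<in> lines_through x"
  obtains v where "norm v = 1" "L = range (\<lambda>t. x + t *\<^sub>R v)"
proof -
  obtain w where w: "w \<noteq> 0" "L = {x + t *\<^sub>R w | t. True}"
    using assms unfolding lines_through_def by auto
  define v where "v = w /\<^sub>R norm w"
  have "L = range (\<lambda>t. x + t *\<^sub>R v)"
  proof (intro equalityI subsetI)
    fix y assume "y \<in> L"
    then obtain t where "y = x + t *\<^sub>R w" using w by auto
    then have "y = x + (t * norm w) *\<^sub>R v" using w by (simp add: v_def)
    then show "y \<in> range (\<lambda>t. x + t *\<^sub>R v)" by blast
  next
    fix y assume "y \<in> range (\<lambda>t. x + t *\<^sub>R v)"
    then obtain t where "y = x + t *\<^sub>R v" by auto
    then have "y = x + (t / norm w) *\<^sub>R w" by (simp add: v_def divide_inverse)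
    then show "y \<in> L" using w by auto
  qed
  moreover have "norm v = 1" using w by (simp add: v_def)
  ultimately show ?thesis using that by blast
qed

lemma bdd_above_infdist_cball:
  assumes "a \<in> A"
  shows "bdd_above ((\<lambda>y. infdist y A) ` (B \<inter> cball a r))"
proof (rule bdd_aboveI)
  fix z assume "z \<in> (\<lambda>y. infdist y A) ` (B \<inter> cball a r)"
  then obtain y where "y \<in> cball a r" "z = infdist y A" by blast
  with infdist_le[OF assms, of y] show "z \<le> r" by (simp add: dist_commute)
qed

lemma beta_approximating_line:
  fixes K :: "(real^2) set"
  assumes "connected K" "x \<in> K" "0 < r" "r * beta K x r < d"
  obtains v where "approximating_line K x v r d"
proof -
  define \<Phi> where "\<Phi> L = max (SUP y \<in> K \<inter> cball x r. infdist y L) (SUP y \<in> L \<inter> cball x r. infdist y K)"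
    for L
  have "r * beta K x r = (INF L \<in> lines_through x. \<Phi> L)"
    using \<open>0 < r\<close> unfolding beta_def \<Phi>_def by simp
  moreover obtain w :: "real^2" where "norm w = 1" using vector_choose_size[of 1] by auto
  then have "lines_through x \<noteq> {}" unfolding lines_through_def by auto
  ultimately obtain L where "L \<in> lines_through x" "\<Phi> L < d"
    using cInf_lessD[of "\<Phi> ` lines_through x" d] assms(4) by auto
  moreover obtain v where v: "norm v = 1" "L = range (\<lambda>t. x + t *\<^sub>R v)"
    using lines_through_unit[OF \<open>L \<in> lines_through x\<close>] .
  ultimately have near: "(SUP y \<in> K \<inter> cball x r. infdist y L) < d" "(SUP y \<in> L \<inter> cball x r. infdist y K) < d"
    unfolding \<Phi>_def by auto
  have "x \<in> L" using v by (auto intro: range_eqI[of _ _ 0])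
  show ?thesis
  proof (rule that, unfold_locales)
    fix y assume "y \<in> K" "dist x y \<le> r"
    then have "infdist y L \<le> (SUP y \<in> K \<inter> cball x r. infdist y L)"
      by (intro cSUP_upper bdd_above_infdist_cball \<open>x \<in> L\<close>) auto
    with near(1) show "norm ((y - x) - ((y - x) \<bullet> v) *\<^sub>R v) < d"
      using infdist_line_unit[OF v(1), of y x] v(2) by simp
  next
    fix u :: real assume "\<bar>u\<bar> \<le> r"
    then have "x + u *\<^sub>R v \<in> L \<inter> cball x r" using v by (auto simp: dist_norm)
    then have "infdist (x + u *\<^sub>R v) K \<le> (SUP y \<in> L \<inter> cball x r. infdist y K)"
      by (intro cSUP_upper bdd_above_infdist_cball \<open>x \<in> K\<close>)
    with near(2) have "infdist (x + u *\<^sub>R v) K < d" by linarith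
    then have "(INF k \<in> K. dist (x + u *\<^sub>R v) k) < d"
      using infdist_notempty[of K "x + u *\<^sub>R v"] \<open>x \<in> K\<close> by force
    then show "\<exists>k\<in>K. dist k (x + u *\<^sub>R v) < d"
      using cInf_lessD[of "dist (x + u *\<^sub>R v) ` K" d] \<open>x \<in> K\<close> by (auto simp: dist_commute)
  qed (use assms v in auto)
qed

theorem lemma5p4:
  fixes K :: "(real^2) set" and x :: "real^2" and r :: real
  assumes "compact K" and "connected K" and "hausdorff1 K < \<infinity>"
    and "x \<in> K" and "0 < r" and "r < diameter K"
    and "beta K x r \<le> 1/2"
  shows "hausdorff1 (K \<inter> ball x r) \<ge> ennreal (2 * r - 3 * r * beta K x r)"
proof -
  define \<beta> where "\<beta> = beta K x r"
  have "((\<lambda>d. ennreal (2 * r - 3 * d)) \<longlongrightarrow> ennreal (2 * r - 3 * (r * \<beta>))) (at_right (r * \<beta>))"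
    by (intro tendsto_intros)
  moreover have "\<forall>\<^sub>F d in at_right (r * \<beta>). ennreal (2 * r - 3 * d) \<le> hausdorff1 (K \<inter> ball x r)"
    unfolding eventually_at_right_field
  proof (intro exI conjI allI impI)
    show "r * \<beta> < 4 * r / 5" using assms(5,7) unfolding \<beta>_def by (simp add: mult_left_mono)
  next
    fix d assume "r * \<beta> < d" "d < 4 * r / 5"
    then obtain v where "approximating_line K x v r d"
      using beta_approximating_line assms(2,4,5) unfolding \<beta>_def by blast
    then show "ennreal (2 * r - 3 * d) \<le> hausdorff1 (K \<inter> ball x r)"
      by (rule approximating_line.hausdorff1_ball_ge) (use \<open>d < 4 * r / 5\<close> in simp)
  qed
  ultimately have "ennreal (2 * r - 3 * (r * \<beta>)) \<le> hausdorff1 (K \<inter> ball x r)"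
    by (intro tendsto_le[OF _ tendsto_const]) auto
  then show ?thesis unfolding \<beta>_def by (simp add: mult.assoc)
qed

end
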